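(* Let $T:I\to I$, $I=[0,1]$, be a non-singular map whose Perron–Frobenius operator $P$ satisfies: there exist $\alpha_0\in(0,1)$ and $B_0\ge0$ with $VPf\le\alpha_0Vf+B_0\|f\|_1$ for all $f\in BV(I)$. Let $\Gamma=\max\{\alpha_0+1,B_0\}$, let $\eta$ be a finite partition of $I$ into intervals, $\varepsilon=\mathrm{mesh}(\eta)$, and $P_\eta=\Pi_\eta\circ P\circ\Pi_\eta$. Then (1) $|||P_\eta-P|||\le\Gamma\varepsilon$; (2) if $H\subset I$ is an open interval with $\lambda(H)\le\Gamma\varepsilon$, then $|||P_\eta-P_H|||\le 2\Gamma\varepsilon$.
   Context: $\lambda$ is Lebesgue measure on $I$. For $f\in L^1(I,\lambda)$, $Vf=\inf\{\mathrm{var}\,\bar f:\bar f=f\text{ a.e.}\}$; $BV(I)=\{f: Vf<\infty\}$ with norm $\|f\|_{BV}=Vf+\|f\|_1$. The Perron–Frobenius operator is defined by $\int_APf\,d\lambda=\int_{T^{-1}A}f\,d\lambda$. $\mathrm{mesh}(\eta)$ is the maximal length of an interval of $\eta$; $\Pi_\eta f(x)=\frac1{\lambda(J)}\int_Jf\,d\lambda$ for $x\in J\in\eta$. For an open interval $H$, $X_0=I\setminus H$ and $P_Hf=P(f\chi_{X_0})$ is the Perron–Frobenius operator of the map with hole $T|_{X_0}$. For an operator $Q$ on $BV(I)$, the mixed norm is $|||Q|||=\sup_{\|f\|_{BV}\le1}\|Qf\|_1$. *)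

theory Defs
  imports "HOL-Analysis.Analysis"
begin

abbreviation unitI :: "real set" where "unitI \<equiv> {0..1}"

abbreviation lamI :: "real measure" where "lamI \<equiv> lebesgue_on {0..1}"

definition var01 :: "(real \<Rightarrow> real) \<Rightarrow> ennreal" where
  "var01 g = (SUP xs \<in> {xs. sorted xs \<and> set xs \<subseteq> {0..1}}.
      ennreal (\<Sum>i < length xs - 1. \<bar>g (xs ! Suc i) - g (xs ! i)\<bar>))"

definition Vvar :: "(real \<Rightarrow> real) \<Rightarrow> ennreal" where
  "Vvar f = (INF g \<in> {g. AE x in lamI. g x = f x}. var01 g)"

definition L1norm :: "(real \<Rightarrow> real) \<Rightarrow> ennreal" where
  "L1norm f = (\<integral>\<^sup>+ x. ennreal \<bar>f x\<bar> \<partial>lamI)"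

definition BV01 :: "(real \<Rightarrow> real) set" where
  "BV01 = {f. integrable lamI f \<and> Vvar f < \<infinity>}"

definition BVnorm :: "(real \<Rightarrow> real) \<Rightarrow> ennreal" where
  "BVnorm f = Vvar f + L1norm f"

definition mixnorm :: "((real \<Rightarrow> real) \<Rightarrow> (real \<Rightarrow> real)) \<Rightarrow> ennreal" where
  "mixnorm Q = (SUP f \<in> {f \<in> BV01. BVnorm f \<le> 1}. L1norm (Q f))"

definition nonsingular01 :: "(real \<Rightarrow> real) \<Rightarrow> bool" where
  "nonsingular01 T \<longleftrightarrow> (\<forall>x\<in>{0..1}. T x \<in> {0..1}) \<and> T \<in> borel_measurable lamI \<and>
     (\<forall>A. A \<in> null_sets lamI \<longrightarrow> T -` A \<inter> {0..1} \<in> null_sets lamI)"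

definition is_PF :: "(real \<Rightarrow> real) \<Rightarrow> ((real \<Rightarrow> real) \<Rightarrow> (real \<Rightarrow> real)) \<Rightarrow> bool" where
  "is_PF T P \<longleftrightarrow> (\<forall>f. integrable lamI f \<longrightarrow> integrable lamI (P f) \<and>
     (\<forall>A \<in> sets lamI. (LINT x:A|lamI. P f x) = (LINT x:(T -` A \<inter> {0..1})|lamI. f x)))"

definition interval_partition01 :: "real set set \<Rightarrow> bool" where
  "interval_partition01 \<eta> \<longleftrightarrow> finite \<eta> \<and> disjoint \<eta> \<and> \<Union>\<eta> = {0..1} \<and>
     (\<forall>J\<in>\<eta>. is_interval J \<and> J \<noteq> {})"

definition mesh :: "real set set \<Rightarrow> real" where
  "mesh \<eta> = Max ((\<lambda>J. measure lborel J) ` \<eta>)"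

definition Pi_eta :: "real set set \<Rightarrow> (real \<Rightarrow> real) \<Rightarrow> (real \<Rightarrow> real)" where
  "Pi_eta \<eta> f x = (\<Sum>J\<in>\<eta>. indicator J x * ((LINT y:J|lebesgue. f y) / measure lebesgue J))"

definition P_hole :: "((real \<Rightarrow> real) \<Rightarrow> (real \<Rightarrow> real)) \<Rightarrow> real set \<Rightarrow> (real \<Rightarrow> real) \<Rightarrow> (real \<Rightarrow> real)" where
  "P_hole P H f = P (\<lambda>x. f x * indicator ({0..1} - H) x)"

end

theory Submission
  imports Defs
begin

text \<open>
  Write \<open>P\<^sub>\<eta> - P = \<Pi>\<^sub>\<eta> P (\<Pi>\<^sub>\<eta> - id) + (\<Pi>\<^sub>\<eta> - id) P\<close>. Both \<open>\<Pi>\<^sub>\<eta>\<close> and \<open>P\<close> contract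
  \<open>L\<^sup>1\<close>, and on a cell \<open>J\<close> of \<open>\<eta>\<close> the averaging error \<open>\<integral>\<^sub>J |\<Pi>\<^sub>\<eta> h - h|\<close> is at most
  \<open>\<lambda>(J)\<close> times the variation of \<open>h\<close> on \<open>J\<close>. Variations over disjoint intervals add up to at
  most the total variation, so \<open>\<parallel>\<Pi>\<^sub>\<eta> h - h\<parallel>\<^sub>1 \<le> \<epsilon> V h\<close> and
  \<open>\<parallel>(P\<^sub>\<eta> - P) f\<parallel>\<^sub>1 \<le> \<epsilon> (V f + V (P f)) \<le> \<Gamma> \<epsilon> \<parallel>f\<parallel>\<^sub>B\<^sub>V\<close> by the Lasota--Yorke inequality.
  For the hole, \<open>\<parallel>P f - P\<^sub>H f\<parallel>\<^sub>1 \<le> \<parallel>f \<chi>\<^sub>H\<parallel>\<^sub>1 \<le> \<lambda>(H) sup |f|\<close>, and every version of \<open>f\<close>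
  satisfies \<open>|f| \<le> \<parallel>f\<parallel>\<^sub>1 + var f\<close> pointwise on \<open>[0,1]\<close>.
\<close>

section \<open>Variation on subintervals\<close>

fun list_variation :: "(real \<Rightarrow> real) \<Rightarrow> real list \<Rightarrow> real" where
  "list_variation g [] = 0"
| "list_variation g [x] = 0"
| "list_variation g (x # y # zs) = \<bar>g y - g x\<bar> + list_variation g (y # zs)"

lemma list_variation_eq_sum:
  "list_variation g xs = (\<Sum>i < length xs - 1. \<bar>g (xs ! Suc i) - g (xs ! i)\<bar>)"
proof (induction g xs rule: list_variation.induct)
  case (3 g x y zs)
  have "length (x # y # zs) - 1 = Suc (length (y # zs) - 1)" by simp
  then show ?case using 3 by (simp only: sum.lessThan_Suc_shift) simp
qed auto

lemma list_variation_nonneg: "0 \<le> list_variation g xs"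
  by (induction g xs rule: list_variation.induct) auto

lemma list_variation_append_ge:
  "list_variation g xs + list_variation g ys \<le> list_variation g (xs @ ys)"
proof (induction g xs rule: list_variation.induct)
  case (2 g x)
  then show ?case by (cases ys) (auto simp: list_variation_nonneg)
qed auto

definition variation_on :: "(real \<Rightarrow> real) \<Rightarrow> real \<Rightarrow> real \<Rightarrow> ennreal" where
  "variation_on g a b =
     (SUP xs \<in> {xs. sorted xs \<and> set xs \<subseteq> {a..b}}. ennreal (list_variation g xs))"

lemma var01_eq_variation_on: "var01 g = variation_on g 0 1"
  unfolding var01_def variation_on_def list_variation_eq_sum ..

lemma variation_on_upper:
  "sorted xs \<Longrightarrow> set xs \<subseteq> {a..b} \<Longrightarrow> ennreal (list_variation g xs) \<le> variation_on g a b"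
  unfolding variation_on_def by (rule SUP_upper) auto

lemma variation_on_mono: "a \<le> a' \<Longrightarrow> b' \<le> b \<Longrightarrow> variation_on g a' b' \<le> variation_on g a b"
  unfolding variation_on_def by (rule SUP_subset_mono) auto

lemma abs_diff_le_variation_on:
  assumes "x \<in> {a..b}" "y \<in> {a..b}"
  shows "ennreal \<bar>g x - g y\<bar> \<le> variation_on g a b"
proof -
  have "list_variation g [min x y, max x y] = \<bar>g x - g y\<bar>"
    by (auto simp: min_def max_def)
  moreover have "ennreal (list_variation g [min x y, max x y]) \<le> variation_on g a b"
    using assms by (intro variation_on_upper) (auto simp: min_def max_def)
  ultimately show ?thesis by simp
qed

lemma variation_on_add_le:
  assumes "m \<in> {a..c}"
  shows "variation_on g a m + variation_on g m c \<le> variation_on g a c"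
proof -
  let ?L = "\<lambda>S. {xs. sorted xs \<and> set xs \<subseteq> S}"
  have concat: "ennreal (list_variation g xs) + ennreal (list_variation g ys) \<le> variation_on g a c"
    if "xs \<in> ?L {a..m}" "ys \<in> ?L {m..c}" for xs ys
  proof -
    have "ennreal (list_variation g xs) + ennreal (list_variation g ys)
        \<le> ennreal (list_variation g (xs @ ys))"
      by (simp add: list_variation_nonneg list_variation_append_ge flip: ennreal_plus)
    also have "\<dots> \<le> variation_on g a c"
      using that assms by (intro variation_on_upper) (fastforce simp: sorted_append subset_iff)+
    finally show ?thesis .
  qed
  have nonempty: "?L S \<noteq> {}" for S
    by (metis (mono_tags, lifting) empty_iff empty_set empty_subsetI mem_Collect_eq sorted0)
  have "variation_on g a m + variation_on g m c
      = (SUP xs \<in> ?L {a..m}. ennreal (list_variation g xs) + variation_on g m c)"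
    unfolding variation_on_def[of g a m] by (rule ennreal_SUP_add_left[OF nonempty, symmetric])
  also have "\<dots> = (SUP xs \<in> ?L {a..m}. SUP ys \<in> ?L {m..c}.
                     ennreal (list_variation g xs) + ennreal (list_variation g ys))"
    unfolding variation_on_def by (simp add: ennreal_SUP_add_right[OF nonempty])
  also have "\<dots> \<le> variation_on g a c"
    by (intro SUP_least concat)
  finally show ?thesis .
qed

lemma disjoint_intervals_less:
  fixes J K :: "real set"
  assumes "is_interval J" "is_interval K" "J \<inter> K = {}"
    and "x \<in> J" "y \<in> K" "x < y" "z \<in> J" "w \<in> K"
  shows "z < w"
proof (rule ccontr)
  assume "\<not> z < w"
  then have "w \<le> z" by simp
  show False
  proof (cases "w \<le> x")
    case True
    then have "x \<in> K" using assms(2,5,6,8) unfolding is_interval_1 by fastforce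
    then show False using assms(3,4) by blast
  next
    case False
    then have "w \<in> J" using assms(1,4,7) \<open>w \<le> z\<close> unfolding is_interval_1 by fastforce
    then show False using assms(3,8) by blast
  qed
qed

lemma disjoint_interval_le_Inf:
  fixes J K :: "real set"
  assumes "is_interval J" "is_interval K" "J \<inter> K = {}"
    and "x \<in> J" "y \<in> K" "x \<le> y" "bdd_below K" "z \<in> J"
  shows "z \<le> Inf K"
proof -
  have "x < y" using assms(3-6) by (metis disjoint_iff order_le_less)
  then have "z < w" if "w \<in> K" for w
    using disjoint_intervals_less[OF assms(1-5) _ assms(8) that] by simp
  then show ?thesis using assms(5,7) by (intro cInf_greatest) (auto intro: less_imp_le)
qed

lemma sum_variation_on_intervals_le:
  fixes F :: "real set set"
  assumes "finite F" "disjoint F" "\<forall>J\<in>F. is_interval J \<and> J \<noteq> {} \<and> J \<subseteq> {a..c}"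
  shows "(\<Sum>J\<in>F. variation_on g (Inf J) (Sup J)) \<le> variation_on g a c"
proof -
  \<comment> \<open>Ranking by \<open>Inf J\<close> would not do: disjoint intervals such as \<open>{0}\<close> and \<open>{0<..1}\<close> share it.\<close>
  define p where "p J = (SOME x. x \<in> J)" for J :: "real set"
  have p: "J \<noteq> {} \<Longrightarrow> p J \<in> J" for J unfolding p_def by (simp add: some_in_eq)
  from assms show ?thesis
  proof (induction F arbitrary: c rule: finite_ranking_induct[where f = p])
    case (insert K S)
    show ?case
    proof (cases "K \<in> S")
      case True
      then show ?thesis using insert.IH insert.prems by (simp add: insert_absorb)
    next
      case K_new: False
      have K: "is_interval K" "K \<noteq> {}" "K \<subseteq> {a..c}" using insert.prems by auto
      have bdd: "bdd_below K" "bdd_above K"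
        using K(3) by (meson bdd_above_Icc bdd_below_Icc bdd_above_mono bdd_below_mono)+
      have a_le: "a \<le> Inf K" using K by (intro cInf_greatest) auto
      have le_c: "Inf K \<le> c" "Sup K \<le> c"
        using K bdd p[of K] by (auto intro!: cInf_lower2[of "p K"] cSup_least)
      have S_left: "\<forall>J\<in>S. is_interval J \<and> J \<noteq> {} \<and> J \<subseteq> {a..Inf K}"
      proof
        fix J assume J: "J \<in> S"
        have J_props: "is_interval J" "J \<noteq> {}" "J \<subseteq> {a..c}" using insert.prems J by auto
        have "J \<inter> K = {}"
          using insert.prems(1) J K_new unfolding disjoint_def by (metis insertCI)
        then have "z \<le> Inf K" if "z \<in> J" for z
          using disjoint_interval_le_Inf[OF J_props(1) K(1) _ p[OF J_props(2)] p[OF K(2)]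
              insert.hyps(2)[OF J] bdd(1) that] by simp
        then show "is_interval J \<and> J \<noteq> {} \<and> J \<subseteq> {a..Inf K}" using J_props by auto
      qed
      have "(\<Sum>J\<in>insert K S. variation_on g (Inf J) (Sup J))
          = variation_on g (Inf K) (Sup K) + (\<Sum>J\<in>S. variation_on g (Inf J) (Sup J))"
        using insert.hyps(1) K_new by simp
      also have "\<dots> \<le> variation_on g (Inf K) c + variation_on g a (Inf K)"
        using insert.IH S_left insert.prems(1) unfolding disjoint_def
        by (intro add_mono variation_on_mono le_c) auto
      also have "\<dots> \<le> variation_on g a c"
        using variation_on_add_le[of "Inf K" a c g] a_le le_c by (simp add: add.commute)
      finally show ?thesis .
    qed
  qed simp
qed

section \<open>Averaging over a partition into intervals\<close>

text \<open>Passes a bound proved for every version of a function to the infimum in \<open>Vvar\<close>.\<close>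

lemma ennreal_le_mult_add_INF:
  fixes X a :: ennreal and v :: "'a \<Rightarrow> ennreal"
  assumes "G \<noteq> {}" and "\<And>g. g \<in> G \<Longrightarrow> X \<le> ennreal c * (a + v g)"
  shows "X \<le> ennreal c * (a + (INF g\<in>G. v g))"
proof -
  have "continuous (at_right (Inf (v ` G))) (\<lambda>y. ennreal c * (a + y))"
    unfolding continuous_within by (intro ennreal_tendsto_cmult tendsto_intros) auto
  then have "ennreal c * (a + Inf (v ` G)) = (INF y\<in>v ` G. ennreal c * (a + y))"
    using assms(1) by (intro continuous_at_Inf_mono) (auto intro!: monoI mult_left_mono add_left_mono)
  then show ?thesis using assms(2) by (auto simp: image_image intro!: INF_greatest)
qed

lemma space_lamI: "space lamI = {0..1}"
  by (simp add: space_restrict_space)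

lemma emeasure_lamI_eq_measure:
  assumes "A \<subseteq> {0..1}" "A \<in> sets lebesgue"
  shows "emeasure lamI A = ennreal (measure lamI A)"
  using assms by (intro emeasure_eq_ennreal_measure)
    (auto simp: emeasure_restrict_space top_unique dest!: emeasure_mono[of A "{0..1}" lebesgue])

lemma finite_measure_lamI: "finite_measure lamI"
  by (rule finite_measure_lebesgue_on) simp

lemma measure_lamI_eq: "A \<subseteq> {0..1} \<Longrightarrow> A \<in> sets lebesgue \<Longrightarrow> measure lamI A = measure lebesgue A"
  by (simp add: measure_restrict_space)

lemma set_integral_lebesgue_eq_lamI:
  fixes u :: "real \<Rightarrow> real"
  shows "J \<subseteq> {0..1} \<Longrightarrow> (LINT y:J|lebesgue. u y) = (\<integral>y. indicator J y * u y \<partial>lamI)"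
  unfolding set_lebesgue_integral_def
  by (subst integral_restrict_space) (auto intro!: Bochner_Integration.integral_cong simp: indicator_def)

lemma integrable_real_indicator_mult:
  fixes u :: "'a \<Rightarrow> real"
  shows "A \<in> sets M \<Longrightarrow> integrable M u \<Longrightarrow> integrable M (\<lambda>x. indicator A x * u x)"
  using integrable_real_mult_indicator[of A M u] by (simp add: mult.commute)

lemma abs_average_minus_le:
  fixes h :: "'a \<Rightarrow> real"
  assumes h: "integrable M h" and A: "A \<in> sets M" "0 < measure M A"
    and bound: "AE y in M. y \<in> A \<longrightarrow> \<bar>h y - c\<bar> \<le> W"
  shows "\<bar>(\<integral>y. indicator A y * h y \<partial>M) / measure M A - c\<bar> \<le> W"
proof -
  have "emeasure M A < \<infinity>"
    using A(2) unfolding measure_def by (metis enn2real_top less_irrefl less_top infinity_ennreal_def)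
  then have ind: "integrable M (indicator A :: 'a \<Rightarrow> real)" using A(1) by simp
  have "\<bar>(\<integral>y. indicator A y * h y \<partial>M) - c * measure M A\<bar>
      = \<bar>\<integral>y. indicator A y * (h y - c) \<partial>M\<bar>"
    using integrable_real_indicator_mult[OF A(1) h] ind A(1)
    by (simp add: right_diff_distrib sets.Int_space_eq2 mult.commute)
  also have "\<dots> \<le> (\<integral>y. indicator A y * \<bar>h y - c\<bar> \<partial>M)"
    by (rule order_trans[OF integral_abs_bound]) (simp add: abs_mult)
  also have "\<dots> \<le> (\<integral>y. indicator A y * W \<partial>M)"
  proof (rule integral_mono_AE)
    have "(\<lambda>y. indicator A y * \<bar>h y - c\<bar>) = (\<lambda>y. \<bar>indicator A y * h y - c * indicator A y\<bar>)"
      by (auto simp: indicator_def)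
    then show "integrable M (\<lambda>y. indicator A y * \<bar>h y - c\<bar>)"
      using integrable_real_indicator_mult[OF A(1) h] ind by simp
    show "integrable M (\<lambda>y. indicator A y * W)"
      using ind by simp
    show "AE y in M. indicator A y * \<bar>h y - c\<bar> \<le> indicator A y * W"
      using bound by eventually_elim (auto simp: indicator_def)
  qed
  also have "\<dots> = W * measure M A" using A(1) by (simp add: sets.Int_space_eq2 mult.commute)
  finally have "\<bar>(\<integral>y. indicator A y * h y \<partial>M) - c * measure M A\<bar> \<le> W * measure M A" .
  moreover have "(\<integral>y. indicator A y * h y \<partial>M) / measure M A - c
      = ((\<integral>y. indicator A y * h y \<partial>M) - c * measure M A) / measure M A"
    using A(2) by (simp add: diff_divide_distrib)
  ultimately show ?thesis using A(2) by (simp add: abs_div pos_divide_le_eq)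
qed

locale unit_interval_partition =
  fixes \<eta> :: "real set set"
  assumes partition: "interval_partition01 \<eta>"
begin

lemma finite_cells: "finite \<eta>"
  using partition unfolding interval_partition01_def by auto

lemma cell_subset: "J \<in> \<eta> \<Longrightarrow> J \<subseteq> {0..1}"
  using partition unfolding interval_partition01_def by auto

lemma cell_interval: "J \<in> \<eta> \<Longrightarrow> is_interval J"
  using partition unfolding interval_partition01_def by auto

lemma cells_disjoint: "J \<in> \<eta> \<Longrightarrow> K \<in> \<eta> \<Longrightarrow> J \<noteq> K \<Longrightarrow> J \<inter> K = {}"
  using partition unfolding interval_partition01_def disjoint_def by auto

lemma cells_cover: "x \<in> {0..1} \<Longrightarrow> \<exists>J\<in>\<eta>. x \<in> J"
  using partition unfolding interval_partition01_def by auto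

lemma cell_sets_lebesgue: "J \<in> \<eta> \<Longrightarrow> J \<in> sets lebesgue"
  using cell_interval real_interval_borel_measurable by auto

lemma cell_sets_lamI: "J \<in> \<eta> \<Longrightarrow> J \<in> sets lamI"
  using cell_sets_lebesgue cell_subset by (simp add: sets_restrict_space_iff)

lemma sum_cells_indicator_mult:
  assumes "J \<in> \<eta>" "x \<in> J"
  shows "(\<Sum>K\<in>\<eta>. indicator K x * c K) = (c J :: 'a::semiring_1)"
proof -
  have "(\<Sum>K\<in>\<eta>. indicator K x * c K) = (\<Sum>K\<in>{J}. indicator K x * c K)"
    using assms finite_cells cells_disjoint
    by (intro sum.mono_neutral_right) (auto simp: indicator_def disjoint_iff)
  then show ?thesis using assms by simp
qed

lemma sum_indicator_cells:
  assumes "x \<in> {0..1}"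
  shows "(\<Sum>J\<in>\<eta>. indicator J x :: 'a::semiring_1) = 1"
  using cells_cover[OF assms] sum_cells_indicator_mult[where c = "\<lambda>_. 1"] by auto

lemma Pi_eta_eq_average:
  assumes "J \<in> \<eta>" "x \<in> J"
  shows "Pi_eta \<eta> u x = (\<integral>y. indicator J y * u y \<partial>lamI) / measure lamI J"
  unfolding Pi_eta_def sum_cells_indicator_mult[OF assms]
  using assms cell_subset cell_sets_lebesgue
  by (simp add: set_integral_lebesgue_eq_lamI measure_lamI_eq)

lemma measure_cell_le_mesh: "J \<in> \<eta> \<Longrightarrow> measure lamI J \<le> mesh \<eta>"
  unfolding mesh_def using finite_cells cell_subset cell_sets_lebesgue cell_interval
  by (auto intro!: Max_ge simp: measure_lamI_eq real_interval_borel_measurable)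

lemma nn_integral_sum_cells:
  assumes "f \<in> borel_measurable lamI"
  shows "(\<integral>\<^sup>+x. f x \<partial>lamI) = (\<Sum>J\<in>\<eta>. \<integral>\<^sup>+x. indicator J x * f x \<partial>lamI)"
proof -
  have "(\<integral>\<^sup>+x. f x \<partial>lamI) = (\<integral>\<^sup>+x. (\<Sum>J\<in>\<eta>. indicator J x * f x) \<partial>lamI)"
    by (intro nn_integral_cong)
       (simp add: space_lamI sum_indicator_cells flip: sum_distrib_right)
  also have "\<dots> = (\<Sum>J\<in>\<eta>. \<integral>\<^sup>+x. indicator J x * f x \<partial>lamI)"
    using assms cell_sets_lamI by (intro nn_integral_sum) auto
  finally show ?thesis .
qed

lemma integrable_Pi_eta: "integrable lamI (Pi_eta \<eta> u)"
proof -
  have "integrable lamI (indicator J :: real \<Rightarrow> real)" if "J \<in> \<eta>" for J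
    using cell_sets_lamI[OF that] finite_measure.emeasure_finite[OF finite_measure_lamI]
    by (simp add: less_top)
  then show ?thesis
    unfolding Pi_eta_def[abs_def] by (intro Bochner_Integration.integrable_sum) auto
qed

lemma Pi_eta_diff:
  assumes a: "integrable lamI a" and b: "integrable lamI b"
  shows "Pi_eta \<eta> (\<lambda>y. a y - b y) x = Pi_eta \<eta> a x - Pi_eta \<eta> b x"
proof (cases "\<exists>J\<in>\<eta>. x \<in> J")
  case True
  then obtain J where J: "J \<in> \<eta>" "x \<in> J" by blast
  show ?thesis
    unfolding Pi_eta_eq_average[OF J]
    using integrable_real_indicator_mult[OF cell_sets_lamI[OF J(1)] a]
      integrable_real_indicator_mult[OF cell_sets_lamI[OF J(1)] b]
    by (simp add: right_diff_distrib diff_divide_distrib)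
next
  case False
  then show ?thesis by (auto simp: Pi_eta_def indicator_def intro!: sum.neutral)
qed

lemma L1norm_Pi_eta_le:
  assumes u: "integrable lamI u"
  shows "L1norm (Pi_eta \<eta> u) \<le> L1norm u"
proof -
  have cell: "(\<integral>\<^sup>+x. indicator J x * ennreal \<bar>Pi_eta \<eta> u x\<bar> \<partial>lamI)
      \<le> (\<integral>\<^sup>+x. indicator J x * ennreal \<bar>u x\<bar> \<partial>lamI)" if J: "J \<in> \<eta>" for J
  proof -
    let ?m = "measure lamI J" and ?I = "\<integral>y. indicator J y * u y \<partial>lamI"
    have "(\<integral>\<^sup>+x. indicator J x * ennreal \<bar>Pi_eta \<eta> u x\<bar> \<partial>lamI)
        = (\<integral>\<^sup>+x. ennreal \<bar>?I / ?m\<bar> * indicator J x \<partial>lamI)"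
      using Pi_eta_eq_average[OF J] by (intro nn_integral_cong) (auto simp: indicator_def)
    also have "\<dots> = ennreal (\<bar>?I / ?m\<bar> * ?m)"
      using cell_sets_lamI[OF J] emeasure_lamI_eq_measure[OF cell_subset[OF J] cell_sets_lebesgue[OF J]]
      by (simp add: nn_integral_cmult_indicator flip: ennreal_mult)
    also have "\<dots> \<le> ennreal (\<integral>y. indicator J y * \<bar>u y\<bar> \<partial>lamI)"
    proof (rule ennreal_leI)
      have "\<bar>?I / ?m\<bar> * ?m \<le> \<bar>?I\<bar>" by (cases "?m = 0") (simp_all add: abs_div)
      also have "\<dots> \<le> (\<integral>y. \<bar>indicator J y * u y\<bar> \<partial>lamI)" by (rule integral_abs_bound)
      finally show "\<bar>?I / ?m\<bar> * ?m \<le> (\<integral>y. indicator J y * \<bar>u y\<bar> \<partial>lamI)" by (simp add: abs_mult)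
    qed
    also have "\<dots> = (\<integral>\<^sup>+x. ennreal (indicator J x * \<bar>u x\<bar>) \<partial>lamI)"
      using integrable_real_indicator_mult[OF cell_sets_lamI[OF J] integrable_abs[OF u]]
      by (simp add: nn_integral_eq_integral)
    also have "\<dots> = (\<integral>\<^sup>+x. indicator J x * ennreal \<bar>u x\<bar> \<partial>lamI)"
      by (intro nn_integral_cong) (auto simp: indicator_def)
    finally show ?thesis .
  qed
  have "L1norm (Pi_eta \<eta> u) = (\<Sum>J\<in>\<eta>. \<integral>\<^sup>+x. indicator J x * ennreal \<bar>Pi_eta \<eta> u x\<bar> \<partial>lamI)"
    unfolding L1norm_def using integrable_Pi_eta by (intro nn_integral_sum_cells) auto
  also have "\<dots> \<le> (\<Sum>J\<in>\<eta>. \<integral>\<^sup>+x. indicator J x * ennreal \<bar>u x\<bar> \<partial>lamI)"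
    by (intro sum_mono cell)
  also have "\<dots> = L1norm u"
    unfolding L1norm_def using u by (intro nn_integral_sum_cells[symmetric]) auto
  finally show ?thesis .
qed

lemma abs_Pi_eta_minus_le:
  assumes h: "integrable lamI h" and gh: "AE x in lamI. g x = h x"
    and J: "J \<in> \<eta>" "0 < measure lamI J"
    and W: "variation_on g (Inf J) (Sup J) = ennreal W" "0 \<le> W"
  shows "AE x in lamI. x \<in> J \<longrightarrow> \<bar>Pi_eta \<eta> h x - h x\<bar> \<le> W"
proof -
  have "bdd_below J" "bdd_above J"
    using cell_subset[OF J(1)] by (meson bdd_above_Icc bdd_below_Icc bdd_above_mono bdd_below_mono)+
  then have "x \<in> {Inf J..Sup J}" if "x \<in> J" for x using that by (auto intro: cInf_lower cSup_upper)
  then have osc: "\<bar>g y - g x\<bar> \<le> W" if "x \<in> J" "y \<in> J" for x y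
    using abs_diff_le_variation_on[of y "Inf J" "Sup J" x g] that W by simp
  from gh show ?thesis
  proof eventually_elim
    case (elim x)
    show ?case
    proof
      assume x: "x \<in> J"
      have "AE y in lamI. y \<in> J \<longrightarrow> \<bar>h y - h x\<bar> \<le> W"
        using gh by eventually_elim (metis osc x elim)
      then show "\<bar>Pi_eta \<eta> h x - h x\<bar> \<le> W"
        unfolding Pi_eta_eq_average[OF J(1) x] by (rule abs_average_minus_le[OF h cell_sets_lamI[OF J(1)] J(2)])
    qed
  qed
qed

lemma cell_average_error_le:
  assumes h: "integrable lamI h" and gh: "AE x in lamI. g x = h x" and J: "J \<in> \<eta>"
  shows "(\<integral>\<^sup>+x. indicator J x * ennreal \<bar>Pi_eta \<eta> h x - h x\<bar> \<partial>lamI)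
    \<le> ennreal (measure lamI J) * variation_on g (Inf J) (Sup J)"
proof -
  have emeasure_J: "emeasure lamI J = ennreal (measure lamI J)"
    using emeasure_lamI_eq_measure[OF cell_subset[OF J] cell_sets_lebesgue[OF J]] .
  show ?thesis
  proof (cases "measure lamI J = 0")
    case True
    have "(\<integral>\<^sup>+x. indicator J x * ennreal \<bar>Pi_eta \<eta> h x - h x\<bar> \<partial>lamI) \<le> (\<integral>\<^sup>+x. top * indicator J x \<partial>lamI)"
      by (intro nn_integral_mono) (auto simp: indicator_def)
    also have "\<dots> = 0"
      using cell_sets_lamI[OF J] emeasure_J True by (simp add: nn_integral_cmult_indicator)
    finally show ?thesis by simp
  next
    case False
    then have m: "0 < measure lamI J" using measure_nonneg[of lamI J] by linarith
    show ?thesis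
    proof (cases "variation_on g (Inf J) (Sup J)" rule: ennreal_cases)
      case top
      then show ?thesis using m by (simp add: ennreal_mult_top)
    next
      case (real W)
      have "AE x in lamI. indicator J x * ennreal \<bar>Pi_eta \<eta> h x - h x\<bar> \<le> ennreal W * indicator J x"
        using abs_Pi_eta_minus_le[OF h gh J m real(2,1)]
        by eventually_elim (auto simp: indicator_def ennreal_leI)
      then have "(\<integral>\<^sup>+x. indicator J x * ennreal \<bar>Pi_eta \<eta> h x - h x\<bar> \<partial>lamI)
          \<le> (\<integral>\<^sup>+x. ennreal W * indicator J x \<partial>lamI)"
        by (rule nn_integral_mono_AE)
      also have "\<dots> = ennreal (measure lamI J) * ennreal W"
        using cell_sets_lamI[OF J] emeasure_J by (simp add: nn_integral_cmult_indicator mult.commute)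
      finally show ?thesis using real by simp
    qed
  qed
qed

lemma L1norm_Pi_eta_error_le_var01:
  assumes h: "integrable lamI h" and gh: "AE x in lamI. g x = h x"
  shows "L1norm (\<lambda>x. Pi_eta \<eta> h x - h x) \<le> ennreal (mesh \<eta>) * var01 g"
proof -
  have "L1norm (\<lambda>x. Pi_eta \<eta> h x - h x)
      = (\<Sum>J\<in>\<eta>. \<integral>\<^sup>+x. indicator J x * ennreal \<bar>Pi_eta \<eta> h x - h x\<bar> \<partial>lamI)"
    unfolding L1norm_def using integrable_Pi_eta h by (intro nn_integral_sum_cells) auto
  also have "\<dots> \<le> (\<Sum>J\<in>\<eta>. ennreal (mesh \<eta>) * variation_on g (Inf J) (Sup J))"
  proof (rule sum_mono)
    fix J assume J: "J \<in> \<eta>"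
    have "ennreal (measure lamI J) \<le> ennreal (mesh \<eta>)"
      using measure_cell_le_mesh[OF J] by (rule ennreal_leI)
    then show "(\<integral>\<^sup>+x. indicator J x * ennreal \<bar>Pi_eta \<eta> h x - h x\<bar> \<partial>lamI)
        \<le> ennreal (mesh \<eta>) * variation_on g (Inf J) (Sup J)"
      using cell_average_error_le[OF h gh J] by (meson mult_right_mono order_trans zero_le)
  qed
  also have "\<dots> = ennreal (mesh \<eta>) * (\<Sum>J\<in>\<eta>. variation_on g (Inf J) (Sup J))"
    by (simp add: sum_distrib_left)
  also have "\<dots> \<le> ennreal (mesh \<eta>) * variation_on g 0 1"
  proof (intro mult_left_mono)
    show "(\<Sum>J\<in>\<eta>. variation_on g (Inf J) (Sup J)) \<le> variation_on g 0 1"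
      using partition unfolding interval_partition01_def by (intro sum_variation_on_intervals_le) blast+
  qed simp
  finally show ?thesis unfolding var01_eq_variation_on .
qed

lemma L1norm_Pi_eta_error_le:
  assumes h: "integrable lamI h"
  shows "L1norm (\<lambda>x. Pi_eta \<eta> h x - h x) \<le> ennreal (mesh \<eta>) * Vvar h"
proof -
  have "h \<in> {g. AE x in lamI. g x = h x}" by simp
  then have versions: "{g. AE x in lamI. g x = h x} \<noteq> {}" by blast
  have "L1norm (\<lambda>x. Pi_eta \<eta> h x - h x)
      \<le> ennreal (mesh \<eta>) * (0 + (INF g \<in> {g. AE x in lamI. g x = h x}. var01 g))"
    using versions by (rule ennreal_le_mult_add_INF) (simp add: L1norm_Pi_eta_error_le_var01[OF h])
  then show ?thesis unfolding Vvar_def by simp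
qed

end

section \<open>Transfer operators and holes\<close>

lemma L1norm_triangle:
  fixes a b c :: "real \<Rightarrow> real"
  assumes "a \<in> borel_measurable lamI" "b \<in> borel_measurable lamI" "c \<in> borel_measurable lamI"
  shows "L1norm (\<lambda>x. a x - c x) \<le> L1norm (\<lambda>x. a x - b x) + L1norm (\<lambda>x. b x - c x)"
proof -
  have "L1norm (\<lambda>x. a x - c x) \<le> (\<integral>\<^sup>+x. ennreal \<bar>a x - b x\<bar> + ennreal \<bar>b x - c x\<bar> \<partial>lamI)"
    unfolding L1norm_def by (intro nn_integral_mono) (simp flip: ennreal_plus)
  also have "\<dots> = L1norm (\<lambda>x. a x - b x) + L1norm (\<lambda>x. b x - c x)"
    unfolding L1norm_def using assms by (intro nn_integral_add) auto
  finally show ?thesis .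
qed

lemma preimage_sets_lamI:
  assumes T: "nonsingular01 T" and A: "A \<in> sets lamI"
  shows "T -` A \<inter> {0..1} \<in> sets lamI"
proof -
  have T_meas: "T \<in> borel_measurable lamI" and T_into: "\<And>x. x \<in> {0..1} \<Longrightarrow> T x \<in> {0..1}"
    and T_null: "\<And>Z. Z \<in> null_sets lamI \<Longrightarrow> T -` Z \<inter> {0..1} \<in> null_sets lamI"
    using T unfolding nonsingular01_def by auto
  have "A \<in> sets lebesgue" using A by (auto simp: sets_restrict_space_iff)
  then obtain S N N' where SN: "A = S \<union> N" "N \<subseteq> N'" "N' \<in> null_sets lborel" "S \<in> sets lborel"
    by (rule sets_completionE)
  have borel_part: "T -` S \<inter> {0..1} \<in> sets lamI"
    using measurable_sets[OF T_meas, of S] SN(4) space_lamI by simp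
  define Z where "Z = N' \<inter> {0..1}"
  have "Z \<in> null_sets lebesgue"
    using null_sets_completionI[OF SN(3)] unfolding Z_def by (rule null_sets_completion_subset[rotated]) auto
  then have "Z \<in> null_sets lamI" by (subst null_sets_restrict_space) (auto simp: Z_def)
  then have "T -` Z \<inter> {0..1} \<in> null_sets lebesgue"
    using T_null by (subst (asm) null_sets_restrict_space) auto
  moreover have "T -` N \<inter> {0..1} \<subseteq> T -` Z \<inter> {0..1}" using SN(2) T_into unfolding Z_def by auto
  ultimately have "T -` N \<inter> {0..1} \<in> null_sets lebesgue" by (rule null_sets_completion_subset[rotated])
  then have null_part: "T -` N \<inter> {0..1} \<in> sets lamI" by (auto simp: sets_restrict_space_iff)
  have "T -` A \<inter> {0..1} = (T -` S \<inter> {0..1}) \<union> (T -` N \<inter> {0..1})" using SN(1) by auto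
  then show ?thesis using borel_part null_part by simp
qed

lemma L1norm_le_if_transfer:
  assumes T: "nonsingular01 T" and u: "integrable lamI u" and d: "integrable lamI d"
    and transfer: "\<And>A. A \<in> sets lamI \<Longrightarrow>
      (\<integral>x. indicator A x * u x \<partial>lamI) = (\<integral>x. indicator (T -` A \<inter> {0..1}) x * d x \<partial>lamI)"
  shows "L1norm u \<le> L1norm d"
proof -
  define A where "A = {x \<in> space lamI. 0 \<le> u x}"
  define B where "B = space lamI - A"
  have [measurable]: "u \<in> borel_measurable lamI" using u by auto
  have AB: "A \<in> sets lamI" "B \<in> sets lamI" unfolding A_def B_def by measurable
  let ?SA = "T -` A \<inter> {0..1}" and ?SB = "T -` B \<inter> {0..1}"
  have SAB: "?SA \<in> sets lamI" "?SB \<in> sets lamI" using preimage_sets_lamI[OF T] AB by auto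
  have "(\<integral>x. \<bar>u x\<bar> \<partial>lamI) = (\<integral>x. indicator A x * u x - indicator B x * u x \<partial>lamI)"
    by (intro Bochner_Integration.integral_cong) (auto simp: A_def B_def indicator_def)
  also have "\<dots> = (\<integral>x. indicator A x * u x \<partial>lamI) - (\<integral>x. indicator B x * u x \<partial>lamI)"
    using integrable_real_indicator_mult[OF AB(1) u] integrable_real_indicator_mult[OF AB(2) u]
    by (rule Bochner_Integration.integral_diff)
  also have "\<dots> = (\<integral>x. indicator ?SA x * d x \<partial>lamI) - (\<integral>x. indicator ?SB x * d x \<partial>lamI)"
    using transfer AB by simp
  also have "\<dots> = (\<integral>x. indicator ?SA x * d x - indicator ?SB x * d x \<partial>lamI)"
    using integrable_real_indicator_mult[OF SAB(1) d] integrable_real_indicator_mult[OF SAB(2) d]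
    by (rule Bochner_Integration.integral_diff[symmetric])
  also have "\<dots> \<le> (\<integral>x. \<bar>d x\<bar> \<partial>lamI)"
  proof (rule integral_mono)
    show "integrable lamI (\<lambda>x. indicator ?SA x * d x - indicator ?SB x * d x)"
      using integrable_real_indicator_mult[OF SAB(1) d] integrable_real_indicator_mult[OF SAB(2) d]
      by (rule Bochner_Integration.integrable_diff)
    show "integrable lamI (\<lambda>x. \<bar>d x\<bar>)" using d by (rule integrable_abs)
    have "?SA \<inter> ?SB = {}" unfolding B_def by auto
    then show "indicator ?SA x * d x - indicator ?SB x * d x \<le> \<bar>d x\<bar>" for x
      by (cases "x \<in> ?SA"; cases "x \<in> ?SB") auto
  qed
  finally have "(\<integral>x. \<bar>u x\<bar> \<partial>lamI) \<le> (\<integral>x. \<bar>d x\<bar> \<partial>lamI)" .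
  then show ?thesis
    unfolding L1norm_def using u d by (simp add: nn_integral_eq_integral ennreal_leI)
qed

lemma integrable_PF: "is_PF T P \<Longrightarrow> integrable lamI f \<Longrightarrow> integrable lamI (P f)"
  unfolding is_PF_def by simp

lemma L1norm_PF_diff_le:
  assumes T: "nonsingular01 T" and P: "is_PF T P"
    and f: "integrable lamI f" and g: "integrable lamI g"
  shows "L1norm (\<lambda>x. P f x - P g x) \<le> L1norm (\<lambda>x. f x - g x)"
proof (rule L1norm_le_if_transfer[OF T])
  have Pf: "integrable lamI (P f)" "integrable lamI (P g)" using integrable_PF[OF P] f g by auto
  then show "integrable lamI (\<lambda>x. P f x - P g x)" by auto
  show "integrable lamI (\<lambda>x. f x - g x)" using f g by auto
  fix A assume A: "A \<in> sets lamI"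
  have S: "T -` A \<inter> {0..1} \<in> sets lamI" by (rule preimage_sets_lamI[OF T A])
  have "(\<integral>x. indicator A x * P h x \<partial>lamI) = (\<integral>x. indicator (T -` A \<inter> {0..1}) x * h x \<partial>lamI)"
    if "integrable lamI h" for h
    using P that A unfolding is_PF_def set_lebesgue_integral_def by auto
  then show "(\<integral>x. indicator A x * (P f x - P g x) \<partial>lamI)
      = (\<integral>x. indicator (T -` A \<inter> {0..1}) x * (f x - g x) \<partial>lamI)"
    using integrable_real_indicator_mult[OF A] integrable_real_indicator_mult[OF S] Pf f g
    by (simp add: right_diff_distrib Bochner_Integration.integral_diff)
qed

lemma abs_le_L1norm_add_var01:
  assumes f: "integrable lamI f" and gf: "AE y in lamI. g y = f y" and x: "x \<in> {0..1}"
  shows "ennreal \<bar>g x\<bar> \<le> L1norm f + var01 g"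
proof -
  have "measure lamI {0..1} = 1" by (simp add: measure_lamI_eq)
  then have "emeasure lamI (space lamI) = 1"
    using emeasure_lamI_eq_measure[of "{0..1}"] space_lamI by simp
  then have "ennreal \<bar>g x\<bar> = (\<integral>\<^sup>+y. ennreal \<bar>g x\<bar> \<partial>lamI)" by simp
  also have "\<dots> \<le> (\<integral>\<^sup>+y. ennreal \<bar>f y\<bar> + var01 g \<partial>lamI)"
  proof (rule nn_integral_mono_AE)
    show "AE y in lamI. ennreal \<bar>g x\<bar> \<le> ennreal \<bar>f y\<bar> + var01 g"
      using gf AE_space
    proof eventually_elim
      case (elim y)
      then have "ennreal \<bar>g x - g y\<bar> \<le> var01 g"
        unfolding var01_eq_variation_on using x space_lamI by (intro abs_diff_le_variation_on) auto
      moreover have "ennreal \<bar>g x\<bar> \<le> ennreal \<bar>f y\<bar> + ennreal \<bar>g x - g y\<bar>"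
        using elim by (simp flip: ennreal_plus)
      ultimately show ?case by (meson add_left_mono order_trans)
    qed
  qed
  also have "\<dots> = L1norm f + var01 g"
    unfolding L1norm_def using f \<open>emeasure lamI (space lamI) = 1\<close> by (subst nn_integral_add) auto
  finally show ?thesis .
qed

lemma L1norm_restrict_complement_le:
  assumes f: "integrable lamI f" and H: "H \<subseteq> {0..1}" "H \<in> sets lebesgue"
  shows "L1norm (\<lambda>x. f x - f x * indicator ({0..1} - H) x)
    \<le> ennreal (measure lamI H) * (L1norm f + Vvar f)"
proof -
  have H_lamI: "H \<in> sets lamI" using H by (auto simp: sets_restrict_space_iff)
  have version_bound: "L1norm (\<lambda>x. f x - f x * indicator ({0..1} - H) x)
      \<le> ennreal (measure lamI H) * (L1norm f + var01 g)" if gf: "AE x in lamI. g x = f x" for g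
  proof -
    have "L1norm (\<lambda>x. f x - f x * indicator ({0..1} - H) x)
        = (\<integral>\<^sup>+x. ennreal \<bar>f x\<bar> * indicator H x \<partial>lamI)"
      unfolding L1norm_def by (intro nn_integral_cong) (auto simp: indicator_def space_lamI)
    also have "\<dots> \<le> (\<integral>\<^sup>+x. (L1norm f + var01 g) * indicator H x \<partial>lamI)"
      using gf
    proof (intro nn_integral_mono_AE, eventually_elim)
      case (elim x)
      show ?case
        using abs_le_L1norm_add_var01[OF f gf, of x] elim H(1) by (auto simp: indicator_def)
    qed
    also have "\<dots> = ennreal (measure lamI H) * (L1norm f + var01 g)"
      using H_lamI emeasure_lamI_eq_measure[OF H]
      by (subst nn_integral_cmult_indicator) (simp_all add: mult.commute)
    finally show ?thesis .
  qed
  have "f \<in> {g. AE x in lamI. g x = f x}" by simp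
  then have "{g. AE x in lamI. g x = f x} \<noteq> {}" by blast
  then show ?thesis
    unfolding Vvar_def by (rule ennreal_le_mult_add_INF) (simp add: version_bound)
qed

lemma integrable_P_hole:
  assumes P: "is_PF T P" and f: "integrable lamI f" and H: "H \<in> sets lebesgue"
  shows "integrable lamI (P_hole P H f)"
proof -
  have "{0..1} - H \<in> sets lamI" using H by (auto simp: sets_restrict_space_iff)
  then have "integrable lamI (\<lambda>x. f x * indicator ({0..1} - H) x)"
    using f by (rule integrable_real_mult_indicator)
  then show ?thesis unfolding P_hole_def by (rule integrable_PF[OF P])
qed

lemma L1norm_PF_hole_le:
  assumes T: "nonsingular01 T" and P: "is_PF T P" and f: "integrable lamI f"
    and H: "H \<subseteq> {0..1}" "H \<in> sets lebesgue"
  shows "L1norm (\<lambda>x. P f x - P_hole P H f x) \<le> ennreal (measure lamI H) * BVnorm f"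
proof -
  have "{0..1} - H \<in> sets lamI" using H by (auto simp: sets_restrict_space_iff)
  then have "integrable lamI (\<lambda>x. f x * indicator ({0..1} - H) x)"
    using f by (rule integrable_real_mult_indicator)
  then have "L1norm (\<lambda>x. P f x - P_hole P H f x)
      \<le> L1norm (\<lambda>x. f x - f x * indicator ({0..1} - H) x)"
    unfolding P_hole_def by (rule L1norm_PF_diff_le[OF T P f])
  also have "\<dots> \<le> ennreal (measure lamI H) * BVnorm f"
    using L1norm_restrict_complement_le[OF f H] by (simp add: BVnorm_def add.commute)
  finally show ?thesis .
qed

lemma (in unit_interval_partition) L1norm_discretised_PF_error_le:
  assumes T: "nonsingular01 T" and P: "is_PF T P" and f: "integrable lamI f"
  shows "L1norm (\<lambda>x. Pi_eta \<eta> (P (Pi_eta \<eta> f)) x - P f x) \<le> ennreal (mesh \<eta>) * (Vvar f + Vvar (P f))"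
proof -
  have "(\<lambda>x. Pi_eta \<eta> (P (Pi_eta \<eta> f)) x - Pi_eta \<eta> (P f) x)
      = Pi_eta \<eta> (\<lambda>x. P (Pi_eta \<eta> f) x - P f x)"
    using Pi_eta_diff[OF integrable_PF[OF P integrable_Pi_eta[of f]] integrable_PF[OF P f]] by (simp add: fun_eq_iff)
  then have "L1norm (\<lambda>x. Pi_eta \<eta> (P (Pi_eta \<eta> f)) x - Pi_eta \<eta> (P f) x)
      = L1norm (Pi_eta \<eta> (\<lambda>x. P (Pi_eta \<eta> f) x - P f x))"
    by simp
  also have "\<dots> \<le> L1norm (\<lambda>x. P (Pi_eta \<eta> f) x - P f x)"
    using integrable_PF[OF P integrable_Pi_eta[of f]] integrable_PF[OF P f] by (intro L1norm_Pi_eta_le) auto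
  also have "\<dots> \<le> L1norm (\<lambda>x. Pi_eta \<eta> f x - f x)"
    by (rule L1norm_PF_diff_le[OF T P integrable_Pi_eta f])
  also have "\<dots> \<le> ennreal (mesh \<eta>) * Vvar f"
    by (rule L1norm_Pi_eta_error_le[OF f])
  finally have "L1norm (\<lambda>x. Pi_eta \<eta> (P (Pi_eta \<eta> f)) x - Pi_eta \<eta> (P f) x) \<le> ennreal (mesh \<eta>) * Vvar f" .
  moreover have "L1norm (\<lambda>x. Pi_eta \<eta> (P f) x - P f x) \<le> ennreal (mesh \<eta>) * Vvar (P f)"
    by (rule L1norm_Pi_eta_error_le[OF integrable_PF[OF P f]])
  moreover have "L1norm (\<lambda>x. Pi_eta \<eta> (P (Pi_eta \<eta> f)) x - P f x)
      \<le> L1norm (\<lambda>x. Pi_eta \<eta> (P (Pi_eta \<eta> f)) x - Pi_eta \<eta> (P f) x) + L1norm (\<lambda>x. Pi_eta \<eta> (P f) x - P f x)"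
    using integrable_Pi_eta integrable_PF[OF P f] by (intro L1norm_triangle) auto
  ultimately show ?thesis by (simp add: distrib_left add_mono order_trans)
qed

section \<open>The discretisation estimates\<close>

lemma add_le_max_mult_ennreal:
  assumes "0 \<le> \<alpha>" "0 \<le> B" "w \<le> ennreal \<alpha> * v + ennreal B * l"
  shows "v + w \<le> ennreal (max (\<alpha> + 1) B) * (v + l)"
proof -
  have "v + w \<le> ennreal (\<alpha> + 1) * v + ennreal B * l"
    using assms by (simp add: ennreal_plus distrib_right add.assoc add_left_mono add.commute)
  also have "\<dots> \<le> ennreal (max (\<alpha> + 1) B) * v + ennreal (max (\<alpha> + 1) B) * l"
    by (intro add_mono mult_right_mono ennreal_leI) auto
  finally show ?thesis by (simp add: distrib_left)
qed

lemma (in unit_interval_partition) L1norm_discretised_PF_error_le_BVnorm: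
  assumes T: "nonsingular01 T" and P: "is_PF T P" and f: "integrable lamI f"
    and \<alpha>: "0 \<le> \<alpha>" and B: "0 \<le> B"
    and LY: "Vvar (P f) \<le> ennreal \<alpha> * Vvar f + ennreal B * L1norm f"
  shows "L1norm (\<lambda>x. Pi_eta \<eta> (P (Pi_eta \<eta> f)) x - P f x)
    \<le> ennreal (max (\<alpha> + 1) B * mesh \<eta>) * BVnorm f"
proof -
  have "L1norm (\<lambda>x. Pi_eta \<eta> (P (Pi_eta \<eta> f)) x - P f x) \<le> ennreal (mesh \<eta>) * (Vvar f + Vvar (P f))"
    by (rule L1norm_discretised_PF_error_le[OF T P f])
  also have "\<dots> \<le> ennreal (mesh \<eta>) * (ennreal (max (\<alpha> + 1) B) * BVnorm f)"
    unfolding BVnorm_def using \<alpha> B LY by (intro mult_left_mono add_le_max_mult_ennreal) auto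
  also have "\<dots> = ennreal (max (\<alpha> + 1) B * mesh \<eta>) * BVnorm f"
    using \<alpha> by (simp add: ennreal_mult'' mult_ac)
  finally show ?thesis .
qed

lemma (in unit_interval_partition) L1norm_discretised_hole_error_le:
  assumes T: "nonsingular01 T" and P: "is_PF T P" and f: "integrable lamI f"
    and H: "H \<subseteq> {0..1}" "H \<in> sets lebesgue" "measure lamI H \<le> c"
    and discretisation: "L1norm (\<lambda>x. Pi_eta \<eta> (P (Pi_eta \<eta> f)) x - P f x) \<le> ennreal c * BVnorm f"
  shows "L1norm (\<lambda>x. Pi_eta \<eta> (P (Pi_eta \<eta> f)) x - P_hole P H f x) \<le> ennreal (2 * c) * BVnorm f"
proof -
  have "L1norm (\<lambda>x. Pi_eta \<eta> (P (Pi_eta \<eta> f)) x - P_hole P H f x)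
      \<le> L1norm (\<lambda>x. Pi_eta \<eta> (P (Pi_eta \<eta> f)) x - P f x) + L1norm (\<lambda>x. P f x - P_hole P H f x)"
    using integrable_Pi_eta integrable_PF[OF P f] integrable_P_hole[OF P f H(2)]
    by (intro L1norm_triangle borel_measurable_integrable)
  also have "\<dots> \<le> ennreal c * BVnorm f + ennreal (measure lamI H) * BVnorm f"
    by (intro add_mono discretisation L1norm_PF_hole_le[OF T P f H(1,2)])
  also have "\<dots> \<le> ennreal c * BVnorm f + ennreal c * BVnorm f"
    using H(3) by (intro add_left_mono mult_right_mono ennreal_leI) auto
  also have "\<dots> = ennreal (2 * c) * BVnorm f"
    by (simp add: ennreal_mult'[of 2] mult.assoc flip: distrib_right mult_2)
  finally show ?thesis .
qed

lemma mixnorm_le: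
  assumes "\<And>f. f \<in> BV01 \<Longrightarrow> L1norm (Q f) \<le> ennreal c * BVnorm f"
  shows "mixnorm Q \<le> ennreal c"
  unfolding mixnorm_def
proof (rule SUP_least)
  fix f assume "f \<in> {f \<in> BV01. BVnorm f \<le> 1}"
  then show "L1norm (Q f) \<le> ennreal c"
    using assms[of f] mult_left_mono[of "BVnorm f" 1 "ennreal c"] by auto
qed

theorem lemma4p2:
  fixes T :: "real \<Rightarrow> real" and P :: "(real \<Rightarrow> real) \<Rightarrow> (real \<Rightarrow> real)"
    and \<alpha>0 B0 :: real and \<eta> :: "real set set"
  assumes T: "nonsingular01 T"
    and P: "is_PF T P"
    and \<alpha>0: "0 < \<alpha>0" "\<alpha>0 < 1" and B0: "0 \<le> B0"
    and LY: "\<And>f. f \<in> BV01 \<Longrightarrow> Vvar (P f) \<le> ennreal \<alpha>0 * Vvar f + ennreal B0 * L1norm f"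
    and eta: "interval_partition01 \<eta>"
  shows "mixnorm (\<lambda>f x. Pi_eta \<eta> (P (Pi_eta \<eta> f)) x - P f x)
           \<le> ennreal (max (\<alpha>0 + 1) B0 * mesh \<eta>) \<and>
         (\<forall>H. open H \<and> is_interval H \<and> H \<subseteq> {0..1} \<and>
           measure lborel H \<le> max (\<alpha>0 + 1) B0 * mesh \<eta> \<longrightarrow>
           mixnorm (\<lambda>f x. Pi_eta \<eta> (P (Pi_eta \<eta> f)) x - P_hole P H f x)
             \<le> ennreal (2 * max (\<alpha>0 + 1) B0 * mesh \<eta>))"
proof -
  interpret unit_interval_partition \<eta> by (rule unit_interval_partition.intro[OF eta])
  have discretisation: "L1norm (\<lambda>x. Pi_eta \<eta> (P (Pi_eta \<eta> f)) x - P f x)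
      \<le> ennreal (max (\<alpha>0 + 1) B0 * mesh \<eta>) * BVnorm f" if "f \<in> BV01" for f
    using that \<alpha>0 B0 LY[OF that] unfolding BV01_def
    by (intro L1norm_discretised_PF_error_le_BVnorm[OF T P]) auto
  show ?thesis
  proof (intro conjI allI impI)
    show "mixnorm (\<lambda>f x. Pi_eta \<eta> (P (Pi_eta \<eta> f)) x - P f x) \<le> ennreal (max (\<alpha>0 + 1) B0 * mesh \<eta>)"
      by (rule mixnorm_le discretisation)+
  next
    fix H :: "real set"
    assume "open H \<and> is_interval H \<and> H \<subseteq> {0..1} \<and> measure lborel H \<le> max (\<alpha>0 + 1) B0 * mesh \<eta>"
    then have H: "H \<subseteq> {0..1}" "H \<in> sets lebesgue" "measure lamI H \<le> max (\<alpha>0 + 1) B0 * mesh \<eta>"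
      by (auto simp: measure_lamI_eq)
    show "mixnorm (\<lambda>f x. Pi_eta \<eta> (P (Pi_eta \<eta> f)) x - P_hole P H f x)
        \<le> ennreal (2 * max (\<alpha>0 + 1) B0 * mesh \<eta>)"
      unfolding mult.assoc using discretisation
      by (intro mixnorm_le L1norm_discretised_hole_error_le[OF T P _ H]) (auto simp: BV01_def)
  qed
qed

end
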